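(* Let $N\ge1$, $1\le q_0\le N$, $g_0:=\gcd(2N+2,q_0)$ and $\kappa_0:=\frac{2N+2}{g_0}$. Let $\overline q_k=(kq_0)\bmod(2N+2)$ if this is $<N+1$ and $\overline q_k=2N+2-(kq_0)\bmod(2N+2)$ otherwise ($k\ge1$). Then the $q_0$-breather sequence of modes $\{\overline q_k\}$ coincides with $\mathrm{Fix}(R^{\kappa_0})\cap\mathrm{Fix}(S)$ regarded as an invariant submanifold of $\mathrm{Fix}(S)$; that is, $\{\overline q_k:k\ge1\}\cap\{1,\dots,N\}=\{j\in\{1,\dots,N\}: j\equiv0 \bmod g_0\}$, the latter being exactly the set of modes $j$ whose coordinates $(Q_j,P_j)$ are not forced to vanish on $\mathrm{Fix}(R^{\kappa_0})\cap\mathrm{Fix}(S)$.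
   Context: Embed the fixed-boundary FPU chain of $N$ particles in the periodic chain of $2N+2$ particles, with Fourier mode coordinates $(Q_j,P_j)$, $j\in\mathbb Z/(2N+2)$. $R$ is the lattice shift symmetry of the periodic chain and $S$ the reflection symmetry $(Q_j,P_j)\mapsto(-Q_{2N+2-j},-P_{2N+2-j})$; for a map $G$, $\mathrm{Fix}(G)$ is its fixed-point set. Then $\mathrm{Fix}(S)=\{Q_j=-Q_{2N+2-j},P_j=-P_{2N+2-j}\}$ is identified with the fixed-boundary chain (modes $j=1,\dots,N$), and for $2N+2=\kappa g$, $\mathrm{Fix}(R^\kappa)=\{Q_j=P_j=0 \text{ whenever } j\not\equiv0\bmod g\}$. *)

theory Defs
  imports Complex_Main
begin

text \<open>Phase space of the periodic chain of 2N+2 particles in Fourier mode coordinates: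
  pairs (Q,P) of functions on mode indices j = 0..2N+1 (indices taken mod 2N+2;
  coordinates outside 0..2N+1 are set to zero).\<close>

definition phase_space :: "nat \<Rightarrow> ((nat \<Rightarrow> real) \<times> (nat \<Rightarrow> real)) set" where
  "phase_space N = {(Q,P). \<forall>j\<ge>2*N+2. Q j = 0 \<and> P j = 0}"

definition FixS :: "nat \<Rightarrow> ((nat \<Rightarrow> real) \<times> (nat \<Rightarrow> real)) set" where
  "FixS N = {(Q,P) \<in> phase_space N. \<forall>j<2*N+2.
       Q j = - Q ((2*N+2 - j) mod (2*N+2)) \<and> P j = - P ((2*N+2 - j) mod (2*N+2))}"

definition FixR_pow :: "nat \<Rightarrow> nat \<Rightarrow> ((nat \<Rightarrow> real) \<times> (nat \<Rightarrow> real)) set" where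
  "FixR_pow N \<kappa> = {(Q,P) \<in> phase_space N. \<forall>j<2*N+2.
       \<not> ((2*N+2) div \<kappa>) dvd j \<longrightarrow> Q j = 0 \<and> P j = 0}"

definition qbar :: "nat \<Rightarrow> nat \<Rightarrow> nat \<Rightarrow> nat" where
  "qbar N q0 k = (let r = (k*q0) mod (2*N+2) in if r < N+1 then r else 2*N+2 - r)"

end

theory Submission
  imports Defs
begin

text \<open>Write M = 2N+2 and g0 = gcd M q0. Every residue (k q0) mod M is a multiple of g0, and
  so is its reflection M - (k q0) mod M; conversely, by Bezout every multiple of g0 in 1..N is
  such a residue. On the other
  side, Fix(R^kappa0) kills precisely the modes that are not multiples of M div kappa0 = g0,
  while the antisymmetric excitation of a single mode j (Q_j = 1, Q_(M-j) = -1) lies in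
  Fix(R^kappa0) \<inter> Fix(S) whenever g0 divides j.\<close>

lemma exists_multiple_mod_eq_if_gcd_dvd:
  fixes m q j :: nat
  assumes "m > 0" and "q > 0" and "gcd m q dvd j"
  shows "\<exists>k\<ge>1. (k * q) mod m = j mod m"
proof -
  obtain t where t: "j = gcd m q * t" using assms(3) by blast
  obtain x y where xy: "q * x = m * y + gcd q m" using bezout_nat[of q m] assms(2) by blast
  have "((x * t + m) * q) mod m = (q * x * t) mod m"
    by (simp add: algebra_simps)
  also have "\<dots> = (j + m * (y * t)) mod m"
    using xy t by (simp add: algebra_simps gcd.commute)
  also have "\<dots> = j mod m"
    by simp
  finally show ?thesis
    \<comment> \<open>the summand m does not change the residue; it only ensures k \<ge> 1\<close>
    using assms(1) by (intro exI[of _ "x * t + m"]) auto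
qed

lemma gcd_dvd_qbar: "gcd (2*N+2) q dvd qbar N q k"
proof -
  define r where "r = (k * q) mod (2*N+2)"
  have "gcd (2*N+2) q dvd r"
    unfolding r_def by (simp add: dvd_mod)
  moreover have "r \<le> 2*N+2"
    unfolding r_def using mod_less_divisor[of "2*N+2" "k*q"] by linarith
  ultimately have "gcd (2*N+2) q dvd 2*N+2 - r"
    by (simp add: dvd_diff_nat)
  with \<open>gcd (2*N+2) q dvd r\<close> show ?thesis
    unfolding qbar_def r_def[symmetric] Let_def by auto
qed

lemma qbar_modes:
  fixes N q :: nat
  assumes "q > 0"
  shows "{qbar N q k | k. k \<ge> 1} \<inter> {1..N} = {j \<in> {1..N}. gcd (2*N+2) q dvd j}"
proof (intro equalityI subsetI)
  fix j assume "j \<in> {qbar N q k | k. k \<ge> 1} \<inter> {1..N}"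
  then show "j \<in> {j \<in> {1..N}. gcd (2*N+2) q dvd j}"
    using gcd_dvd_qbar by blast
next
  fix j assume j: "j \<in> {j \<in> {1..N}. gcd (2*N+2) q dvd j}"
  then obtain k where "k \<ge> 1" "(k * q) mod (2*N+2) = j mod (2*N+2)"
    using exists_multiple_mod_eq_if_gcd_dvd[of "2*N+2" q j] assms by auto
  moreover have "j mod (2*N+2) = j" and "j < N+1"
    using j by auto
  ultimately have "qbar N q k = j" and "k \<ge> 1"
    unfolding qbar_def Let_def by auto
  with j show "j \<in> {qbar N q k | k. k \<ge> 1} \<inter> {1..N}"
    by blast
qed

definition single_mode :: "nat \<Rightarrow> nat \<Rightarrow> nat \<Rightarrow> real" where
  "single_mode N j = (\<lambda>i. if i = j then 1 else if i = 2*N+2 - j then -1 else 0)"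

lemma single_mode_in_FixS:
  assumes "1 \<le> j" and "j \<le> N"
  shows "(single_mode N j, \<lambda>_. 0) \<in> FixS N"
proof -
  have antisym: "single_mode N j i = - single_mode N j ((2*N+2 - i) mod (2*N+2))"
    if "i < 2*N+2" for i
  proof (cases "i = 0")
    case False
    then have "(2*N+2 - i) mod (2*N+2) = 2*N+2 - i"
      using that by simp
    then show ?thesis
      using assms that False unfolding single_mode_def by auto
  qed (use assms in \<open>auto simp: single_mode_def\<close>)
  have "(single_mode N j, \<lambda>_. 0) \<in> phase_space N"
    using assms unfolding phase_space_def single_mode_def by auto
  moreover have "\<forall>i<2*N+2. single_mode N j i = - single_mode N j ((2*N+2 - i) mod (2*N+2))
      \<and> (0::real) = - 0"
    by (intro allI impI conjI antisym) simp_all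
  ultimately show ?thesis
    unfolding FixS_def by blast
qed

lemma div_div_cancel_nat:
  fixes n g :: nat
  assumes "g dvd n" and "n > 0"
  shows "n div (n div g) = g"
  using assms by (auto elim!: dvdE)

lemma single_mode_in_FixR_pow:
  assumes "g dvd 2*N+2" and "g dvd j" and "1 \<le> j" and "j \<le> N"
  shows "(single_mode N j, \<lambda>_. 0) \<in> FixR_pow N ((2*N+2) div g)"
proof -
  have "g dvd 2*N+2 - j"
    using assms by (simp add: dvd_diff_nat)
  then show ?thesis
    using assms div_div_cancel_nat[OF assms(1), simplified]
    unfolding FixR_pow_def phase_space_def single_mode_def by auto
qed

lemma FixR_pow_FixS_modes:
  assumes "g dvd 2*N+2"
  shows "{j \<in> {1..N}. \<exists>Q P. (Q,P) \<in> FixR_pow N ((2*N+2) div g) \<inter> FixS N \<and> (Q j \<noteq> 0 \<or> P j \<noteq> 0)}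
    = {j \<in> {1..N}. g dvd j}"
proof (intro equalityI subsetI)
  fix j assume "j \<in> {j \<in> {1..N}. \<exists>Q P. (Q,P) \<in> FixR_pow N ((2*N+2) div g) \<inter> FixS N
    \<and> (Q j \<noteq> 0 \<or> P j \<noteq> 0)}"
  then obtain Q P where j: "j \<in> {1..N}" and QP: "(Q,P) \<in> FixR_pow N ((2*N+2) div g)"
    and nonzero: "Q j \<noteq> 0 \<or> P j \<noteq> 0"
    by blast
  have "g dvd j"
  proof (rule ccontr)
    assume "\<not> g dvd j"
    moreover have "j < 2*N+2"
      using j by simp
    ultimately have "Q j = 0 \<and> P j = 0"
      using QP div_div_cancel_nat[OF assms] unfolding FixR_pow_def by simp
    with nonzero show False
      by blast
  qed
  with j show "j \<in> {j \<in> {1..N}. g dvd j}"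
    by blast
next
  fix j assume "j \<in> {j \<in> {1..N}. g dvd j}"
  then have j: "1 \<le> j" "j \<le> N" "g dvd j"
    by auto
  then have "(single_mode N j, \<lambda>_. 0) \<in> FixR_pow N ((2*N+2) div g) \<inter> FixS N"
    using single_mode_in_FixR_pow[OF assms] single_mode_in_FixS by blast
  moreover have "single_mode N j j \<noteq> 0"
    by (simp add: single_mode_def)
  ultimately show "j \<in> {j \<in> {1..N}. \<exists>Q P. (Q,P) \<in> FixR_pow N ((2*N+2) div g) \<inter> FixS N
    \<and> (Q j \<noteq> 0 \<or> P j \<noteq> 0)}"
    using j by auto
qed

theorem proposition4:
  fixes N q0 g0 \<kappa>0 :: nat
  assumes "N \<ge> 1" and "1 \<le> q0" and "q0 \<le> N"
    and "g0 = gcd (2*N+2) q0" and "\<kappa>0 = (2*N+2) div g0"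
  shows "{qbar N q0 k | k. k \<ge> 1} \<inter> {1..N} = {j \<in> {1..N}. j mod g0 = 0}
     \<and> {j \<in> {1..N}. j mod g0 = 0} =
       {j \<in> {1..N}. \<exists>Q P. (Q,P) \<in> FixR_pow N \<kappa>0 \<inter> FixS N \<and> (Q j \<noteq> 0 \<or> P j \<noteq> 0)}"
proof -
  have "{j \<in> {1..N}. j mod g0 = 0} = {j \<in> {1..N}. g0 dvd j}"
    by auto
  moreover have "{qbar N q0 k | k. k \<ge> 1} \<inter> {1..N} = {j \<in> {1..N}. g0 dvd j}"
    using qbar_modes[of q0 N] assms(2,4) by simp
  moreover have "{j \<in> {1..N}. \<exists>Q P. (Q,P) \<in> FixR_pow N \<kappa>0 \<inter> FixS N \<and> (Q j \<noteq> 0 \<or> P j \<noteq> 0)}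
      = {j \<in> {1..N}. g0 dvd j}"
    using FixR_pow_FixS_modes[of g0 N] assms(4,5) by simp
  ultimately show ?thesis
    by simp
qed

end
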